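(* Let $G$ be a finite group with $Z(G)=1$, let $H\subseteq G$ be an abelian subgroup, let $\omega$ be a 2-cocycle on $\widehat H$, and let $A=(kG)^J$ where $J=\sum_{\alpha,\beta\in\widehat H}\omega(\alpha,\beta)e_\alpha\otimes e_\beta$. Let $\eta\in\widehat G=G(A^* )$. Then $\eta\in G(A^* )\cap Z(A^* )$ if and only if the restriction $\eta|_H\in\widehat H$ is $\omega$-regular, i.e. $\omega(\chi,\eta|_H)=\omega(\eta|_H,\chi)$ for all $\chi\in\widehat H$. If moreover $\omega$ is non-degenerate, then $\eta\in G(A^* )\cap Z(A^* )$ if and only if $\eta|_H=1$.
   Context: $k$ is an algebraically closed field of characteristic zero. A twist in a finite dimensional Hopf algebra $A$ is an invertible $J\in A\otimes A$ with $(\Delta\otimes \mathrm{id})(J)(J\otimes 1)=(\mathrm{id}\otimes\Delta)(J)(1\otimes J)$ and $(\epsilon\otimes\mathrm{id})(J)=(\mathrm{id}\otimes\epsilon)(J)=1$; $A^J$ denotes the Hopf algebra with the same algebra structure and counit as $A$, comultiplication $\Delta^J(h)=J^{-1}\Delta(h)J$, and antipode $S^J(h)=v^{-1}S(h)v$, $v=m(S\otimes\mathrm{id})(J)$. For an abelian subgroup $H$ of a finite group $G$, $\widehat H$ is its group of characters $H\to k^*$, and for $\chi\in\widehat H$, $e_\chi=\frac{1}{|H|}\sum_{h\in H}\chi(h^{-1})h\in kH\subseteq kG$. For a 2-cocycle $\omega:\widehat H\times\widehat H\to k^*$, $J=\sum_{\alpha,\beta\in\widehat H}\omega(\alpha,\beta)e_\alpha\otimes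 e_\beta$ is a twist in $kG$ (the twist lifted from $H$ associated with $\omega$). An element $\chi\in\widehat H$ is $\omega$-regular if $\omega(\chi,\psi)=\omega(\psi,\chi)$ for all $\psi\in\widehat H$; $\omega$ is non-degenerate if the trivial character is the only $\omega$-regular element. For $A=(kG)^J$, $G(A^* )$ (group-likes of the dual) equals $\widehat G$, the group of linear characters $G\to k^*$; $Z(\cdot)$ denotes the center. *)

theory Defs
  imports "HOL-Algebra.Group" "HOL-Computational_Algebra.Polynomial"
begin

text \<open>The group algebra kG is represented by coefficient functions 'g => 'k (only values on
  carrier G matter); kG (x) kG = k[G x G] by functions 'g * 'g => 'k.
  Characters of an abelian subgroup H are represented extensionally (value 0 off H).\<close>

definition center_grp :: "('g, 'b) monoid_scheme \<Rightarrow> 'g set" where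
  "center_grp G = {z \<in> carrier G. \<forall>g \<in> carrier G. z \<otimes>\<^bsub>G\<^esub> g = g \<otimes>\<^bsub>G\<^esub> z}"

definition characters :: "('g, 'b) monoid_scheme \<Rightarrow> 'g set \<Rightarrow> ('g \<Rightarrow> 'k::field) set" where
  "characters G H = {\<chi>. (\<forall>x\<in>H. \<forall>y\<in>H. \<chi> (x \<otimes>\<^bsub>G\<^esub> y) = \<chi> x * \<chi> y)
                         \<and> (\<forall>x\<in>H. \<chi> x \<noteq> 0) \<and> (\<forall>x. x \<notin> H \<longrightarrow> \<chi> x = 0)}"

definition char_mult :: "'g set \<Rightarrow> ('g \<Rightarrow> 'k::field) \<Rightarrow> ('g \<Rightarrow> 'k) \<Rightarrow> ('g \<Rightarrow> 'k)" where
  "char_mult H \<alpha> \<beta> = (\<lambda>x. if x \<in> H then \<alpha> x * \<beta> x else 0)"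

definition char_one :: "'g set \<Rightarrow> ('g \<Rightarrow> 'k::field)" where
  "char_one H = (\<lambda>x. if x \<in> H then 1 else 0)"

definition restrict_char :: "'g set \<Rightarrow> ('g \<Rightarrow> 'k::field) \<Rightarrow> ('g \<Rightarrow> 'k)" where
  "restrict_char H \<eta> = (\<lambda>x. if x \<in> H then \<eta> x else 0)"

definition two_cocycle :: "('g, 'b) monoid_scheme \<Rightarrow> 'g set
    \<Rightarrow> (('g \<Rightarrow> 'k::field) \<Rightarrow> ('g \<Rightarrow> 'k) \<Rightarrow> 'k) \<Rightarrow> bool" where
  "two_cocycle G H \<omega> \<longleftrightarrow>
     (\<forall>\<alpha>\<in>characters G H. \<forall>\<beta>\<in>characters G H. \<omega> \<alpha> \<beta> \<noteq> 0) \<and>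
     (\<forall>\<alpha>\<in>characters G H. \<forall>\<beta>\<in>characters G H. \<forall>\<gamma>\<in>characters G H.
        \<omega> \<alpha> \<beta> * \<omega> (char_mult H \<alpha> \<beta>) \<gamma> = \<omega> \<alpha> (char_mult H \<beta> \<gamma>) * \<omega> \<beta> \<gamma>) \<and>
     (\<forall>\<alpha>\<in>characters G H. \<omega> (char_one H) \<alpha> = 1 \<and> \<omega> \<alpha> (char_one H) = 1)"

definition omega_regular :: "('g, 'b) monoid_scheme \<Rightarrow> 'g set
    \<Rightarrow> (('g \<Rightarrow> 'k::field) \<Rightarrow> ('g \<Rightarrow> 'k) \<Rightarrow> 'k) \<Rightarrow> ('g \<Rightarrow> 'k) \<Rightarrow> bool" where
  "omega_regular G H \<omega> \<chi> \<longleftrightarrow> (\<forall>\<psi>\<in>characters G H. \<omega> \<chi> \<psi> = \<omega> \<psi> \<chi>)"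

definition non_degenerate :: "('g, 'b) monoid_scheme \<Rightarrow> 'g set
    \<Rightarrow> (('g \<Rightarrow> 'k::field) \<Rightarrow> ('g \<Rightarrow> 'k) \<Rightarrow> 'k) \<Rightarrow> bool" where
  "non_degenerate G H \<omega> \<longleftrightarrow>
     (\<forall>\<chi>\<in>characters G H. omega_regular G H \<omega> \<chi> \<longrightarrow> \<chi> = char_one H)"

text \<open>Idempotent e_chi = 1/|H| sum_{h in H} chi(h^{-1}) h in kG.\<close>
definition idem :: "('g, 'b) monoid_scheme \<Rightarrow> 'g set \<Rightarrow> ('g \<Rightarrow> 'k::field) \<Rightarrow> ('g \<Rightarrow> 'k)" where
  "idem G H \<chi> = (\<lambda>g. if g \<in> H then \<chi> (inv\<^bsub>G\<^esub> g) / of_nat (card H) else 0)"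

definition tmult :: "('g, 'b) monoid_scheme \<Rightarrow> ('g \<times> 'g \<Rightarrow> 'k::field) \<Rightarrow> ('g \<times> 'g \<Rightarrow> 'k)
    \<Rightarrow> ('g \<times> 'g \<Rightarrow> 'k)" where
  "tmult G x y = (\<lambda>(a, b). if a \<in> carrier G \<and> b \<in> carrier G then
      (\<Sum>(c, d)\<in>carrier G \<times> carrier G.
          x (c, d) * y (inv\<^bsub>G\<^esub> c \<otimes>\<^bsub>G\<^esub> a, inv\<^bsub>G\<^esub> d \<otimes>\<^bsub>G\<^esub> b)) else 0)"

definition tone :: "('g, 'b) monoid_scheme \<Rightarrow> ('g \<times> 'g \<Rightarrow> 'k::field)" where
  "tone G = (\<lambda>(a, b). if a = \<one>\<^bsub>G\<^esub> \<and> b = \<one>\<^bsub>G\<^esub> then 1 else 0)"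

definition tinv :: "('g, 'b) monoid_scheme \<Rightarrow> ('g \<times> 'g \<Rightarrow> 'k::field) \<Rightarrow> ('g \<times> 'g \<Rightarrow> 'k)" where
  "tinv G x = (THE y. (\<forall>p. p \<notin> carrier G \<times> carrier G \<longrightarrow> y p = 0)
                     \<and> tmult G x y = tone G \<and> tmult G y x = tone G)"

definition tensor :: "('g \<Rightarrow> 'k::field) \<Rightarrow> ('g \<Rightarrow> 'k) \<Rightarrow> ('g \<times> 'g \<Rightarrow> 'k)" where
  "tensor x y = (\<lambda>(a, b). x a * y b)"

definition comult :: "('g, 'b) monoid_scheme \<Rightarrow> ('g \<Rightarrow> 'k::field) \<Rightarrow> ('g \<times> 'g \<Rightarrow> 'k)" where
  "comult G x = (\<lambda>(a, b). if a = b \<and> a \<in> carrier G then x a else 0)"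

definition twistJ :: "('g, 'b) monoid_scheme \<Rightarrow> 'g set
    \<Rightarrow> (('g \<Rightarrow> 'k::field) \<Rightarrow> ('g \<Rightarrow> 'k) \<Rightarrow> 'k) \<Rightarrow> ('g \<times> 'g \<Rightarrow> 'k)" where
  "twistJ G H \<omega> = (\<lambda>p. \<Sum>\<alpha>\<in>characters G H. \<Sum>\<beta>\<in>characters G H.
       \<omega> \<alpha> \<beta> * tensor (idem G H \<alpha>) (idem G H \<beta>) p)"

definition comultJ :: "('g, 'b) monoid_scheme \<Rightarrow> 'g set
    \<Rightarrow> (('g \<Rightarrow> 'k::field) \<Rightarrow> ('g \<Rightarrow> 'k) \<Rightarrow> 'k) \<Rightarrow> ('g \<Rightarrow> 'k) \<Rightarrow> ('g \<times> 'g \<Rightarrow> 'k)" where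
  "comultJ G H \<omega> x = tmult G (tmult G (tinv G (twistJ G H \<omega>)) (comult G x)) (twistJ G H \<omega>)"

definition basis_el :: "'g \<Rightarrow> ('g \<Rightarrow> 'k::field)" where
  "basis_el g = (\<lambda>x. if x = g then 1 else 0)"

text \<open>A^* = linear functionals on kG, given by their values on the basis G; the
  product of A^* is dual to Delta^J: (f g)(x) = (f (x) g)(Delta^J(x)).\<close>
definition dual_mult :: "('g, 'b) monoid_scheme \<Rightarrow> 'g set
    \<Rightarrow> (('g \<Rightarrow> 'k::field) \<Rightarrow> ('g \<Rightarrow> 'k) \<Rightarrow> 'k) \<Rightarrow> ('g \<Rightarrow> 'k) \<Rightarrow> ('g \<Rightarrow> 'k) \<Rightarrow> ('g \<Rightarrow> 'k)" where
  "dual_mult G H \<omega> f g = (\<lambda>x. if x \<in> carrier G then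
      (\<Sum>(a, b)\<in>carrier G \<times> carrier G. comultJ G H \<omega> (basis_el x) (a, b) * f a * g b) else 0)"

definition in_dual_center :: "('g, 'b) monoid_scheme \<Rightarrow> 'g set
    \<Rightarrow> (('g \<Rightarrow> 'k::field) \<Rightarrow> ('g \<Rightarrow> 'k) \<Rightarrow> 'k) \<Rightarrow> ('g \<Rightarrow> 'k) \<Rightarrow> bool" where
  "in_dual_center G H \<omega> \<eta> \<longleftrightarrow> (\<forall>f. dual_mult G H \<omega> \<eta> f = dual_mult G H \<omega> f \<eta>)"

text \<open>Linear characters of G (= G(A^*)), extended by 0 off carrier G.\<close>
definition lin_chars :: "('g, 'b) monoid_scheme \<Rightarrow> ('g \<Rightarrow> 'k::field) set" where
  "lin_chars G = characters G (carrier G)"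

end

(* The product of A^* is dual to Delta^J, so eta is central in A^* iff for every x in G the
   slices (eta (x) id) Delta^J(x) and (id (x) eta) Delta^J(x) agree.  Both slice maps are algebra
   maps (eta is a character), and J, J^-1 are combinations of the orthogonal idempotents
   e_a (x) e_b, so the two slices are eta(x) eta_Jinv x eta_J and eta(x) Jinv_eta x J_eta, where
   eta_J = (eta (x) id) J etc. are combinations of the e_b in kH.  Regularity of eta|H gives
   eta_J = J_eta and eta_Jinv = Jinv_eta.  Conversely, centrality makes
   u = J_eta eta_Jinv = sum_b omega(b, eta|H) / omega(eta|H, b) e_b commute with G.  Since the
   alternating form of a cocycle is a bicharacter, the coefficients of u form a character of the
   dual of H, so by duality u is a group element h of H.  Then h is central in G, hence h = 1,
   which says that eta|H is omega-regular. *)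

theory Submission
  imports Defs "HOL-Algebra.Multiplicative_Group"
begin

section \<open>Characters of abelian groups\<close>

definition char_inv :: "'a set \<Rightarrow> ('a \<Rightarrow> 'k::field) \<Rightarrow> ('a \<Rightarrow> 'k)" where
  "char_inv K \<chi> = (\<lambda>x. if x \<in> K then inverse (\<chi> x) else 0)"

lemma character_hom:
  "\<chi> \<in> characters G K \<Longrightarrow> x \<in> K \<Longrightarrow> y \<in> K \<Longrightarrow> \<chi> (x \<otimes>\<^bsub>G\<^esub> y) = \<chi> x * \<chi> y"
  by (simp add: characters_def)

lemma character_nonzero: "\<chi> \<in> characters G K \<Longrightarrow> x \<in> K \<Longrightarrow> \<chi> x \<noteq> 0"
  by (simp add: characters_def)

lemma character_eq_0: "\<chi> \<in> characters G K \<Longrightarrow> x \<notin> K \<Longrightarrow> \<chi> x = 0"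
  by (simp add: characters_def)

lemma characters_eqI:
  assumes "\<alpha> \<in> characters G K" "\<beta> \<in> characters G K" "\<And>x. x \<in> K \<Longrightarrow> \<alpha> x = \<beta> x"
  shows "\<alpha> = \<beta>"
proof
  fix x show "\<alpha> x = \<beta> x"
    using assms character_eq_0[OF assms(1), of x] character_eq_0[OF assms(2), of x]
    by (cases "x \<in> K") auto
qed

lemma char_mult_commute: "char_mult K \<alpha> \<beta> = char_mult K \<beta> \<alpha>"
  unfolding char_mult_def by (auto simp: mult.commute)

lemma char_mult_assoc: "char_mult K (char_mult K \<alpha> \<beta>) \<gamma> = char_mult K \<alpha> (char_mult K \<beta> \<gamma>)"
  unfolding char_mult_def by (auto simp: mult.assoc)

lemma char_mult_char_one: "\<alpha> \<in> characters G K \<Longrightarrow> char_mult K (char_one K) \<alpha> = \<alpha>"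
  unfolding characters_def char_one_def char_mult_def by auto

lemma char_mult_char_inv: "\<alpha> \<in> characters G K \<Longrightarrow> char_mult K (char_inv K \<alpha>) \<alpha> = char_one K"
  unfolding characters_def char_inv_def char_mult_def char_one_def by auto

lemma char_mult_char_inv_eq_char_one_iff:
  assumes "\<alpha> \<in> characters G K" "\<beta> \<in> characters G K"
  shows "char_mult K (char_inv K \<alpha>) \<beta> = char_one K \<longleftrightarrow> \<alpha> = \<beta>"
proof
  assume one: "char_mult K (char_inv K \<alpha>) \<beta> = char_one K"
  show "\<alpha> = \<beta>"
  proof (rule characters_eqI[OF assms])
    fix x assume x: "x \<in> K"
    have "inverse (\<alpha> x) * \<beta> x = 1"
      using fun_cong[OF one, of x] x by (simp add: char_mult_def char_inv_def char_one_def)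
    with character_nonzero[OF assms(1) x] show "\<alpha> x = \<beta> x" by (simp add: field_simps)
  qed
qed (use assms char_mult_char_inv in auto)

context group
begin

lemma character_one:
  assumes "subgroup K G" "\<chi> \<in> characters G K"
  shows "\<chi> \<one> = 1"
proof -
  have "\<one> \<in> K" by (rule subgroup.one_closed[OF assms(1)])
  with character_hom[OF assms(2)] character_nonzero[OF assms(2)] show ?thesis
    by (metis l_one one_closed mult_cancel_left1)
qed

lemma character_inv:
  assumes "subgroup K G" "\<chi> \<in> characters G K" "x \<in> K"
  shows "\<chi> (inv x) = inverse (\<chi> x)"
proof -
  have "inv x \<in> K" by (rule subgroup.m_inv_closed[OF assms(1,3)])
  moreover have "x \<in> carrier G" using subgroup.mem_carrier[OF assms(1,3)] .
  ultimately have "\<chi> x * \<chi> (inv x) = 1"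
    using character_hom[OF assms(2) assms(3)] character_one[OF assms(1,2)] by (metis r_inv)
  thus ?thesis by (metis inverse_unique)
qed

lemma char_one_in_characters: "subgroup K G \<Longrightarrow> char_one K \<in> characters G K"
  unfolding characters_def char_one_def using subgroup.m_closed by fastforce

lemma char_mult_in_characters:
  assumes "subgroup K G" "\<alpha> \<in> characters G K" "\<beta> \<in> characters G K"
  shows "char_mult K \<alpha> \<beta> \<in> characters G K"
  using assms(2,3) subgroup.m_closed[OF assms(1)]
  unfolding characters_def char_mult_def by auto

lemma char_inv_in_characters:
  assumes "subgroup K G" "\<alpha> \<in> characters G K"
  shows "char_inv K \<alpha> \<in> characters G K"
  using assms(2) subgroup.m_closed[OF assms(1)]
  unfolding characters_def char_inv_def by auto

lemma characters_reindex:
  assumes "subgroup K G" "\<beta> \<in> characters G K"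
  shows "(\<Sum>\<gamma>\<in>characters G K. F \<gamma>) = (\<Sum>\<gamma>\<in>characters G K. F (char_mult K \<beta> \<gamma>))"
proof -
  let ?C = "characters G K"
  have "bij_betw (char_mult K \<beta>) ?C ?C"
  proof (rule bij_betw_byWitness[where f' = "char_mult K (char_inv K \<beta>)"])
    show "\<forall>\<gamma>\<in>?C. char_mult K (char_inv K \<beta>) (char_mult K \<beta> \<gamma>) = \<gamma>"
      using assms by (simp add: char_mult_assoc[symmetric] char_mult_char_inv char_mult_char_one)
    show "\<forall>\<gamma>\<in>?C. char_mult K \<beta> (char_mult K (char_inv K \<beta>) \<gamma>) = \<gamma>"
      using assms by (simp add: char_mult_assoc[symmetric] char_mult_commute[of _ \<beta>]
          char_mult_char_inv char_mult_char_one)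
    show "char_mult K \<beta> ` ?C \<subseteq> ?C"
      using char_mult_in_characters[OF assms] by blast
    show "char_mult K (char_inv K \<beta>) ` ?C \<subseteq> ?C"
      using char_mult_in_characters[OF assms(1) char_inv_in_characters[OF assms]] by blast
  qed
  thus ?thesis using sum.reindex_bij_betw by metis
qed

lemma sum_mult_left_reindex:
  assumes "a \<in> carrier G"
  shows "(\<Sum>x\<in>carrier G. f x) = (\<Sum>x\<in>carrier G. f (a \<otimes> x))"
proof -
  have "bij_betw (\<lambda>x. a \<otimes> x) (carrier G) (carrier G)"
    by (rule bij_betw_byWitness[where f' = "\<lambda>x. inv a \<otimes> x"])
       (use assms in \<open>auto simp: m_assoc[symmetric]\<close>)
  thus ?thesis using sum.reindex_bij_betw by metis
qed

lemma sum_inv_reindex: "(\<Sum>x\<in>carrier G. f x) = (\<Sum>x\<in>carrier G. f (inv x))"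
proof -
  have "bij_betw (\<lambda>x. inv x) (carrier G) (carrier G)"
    by (rule bij_betw_byWitness[where f' = "\<lambda>x. inv x"]) auto
  thus ?thesis using sum.reindex_bij_betw by metis
qed

end

text \<open>One step of extending a character: from \<open>K\<close> to the subgroup generated by \<open>K\<close> and \<open>g\<close>,
  sending \<open>g\<close> to an \<open>m\<close>-th root of \<open>\<chi> (g [^] m)\<close>.\<close>
locale character_extension = comm_group G for G (structure) +
  fixes K :: "'a set" and \<chi> :: "'a \<Rightarrow> 'k::field" and g :: 'a and m :: nat and c :: 'k
  assumes subgroup_K: "subgroup K G" and \<chi>: "\<chi> \<in> characters G K" and g: "g \<in> carrier G"
    and m_pos: "0 < m" and pow_m_in: "g [^] m \<in> K"
    and pow_notin: "\<And>j. 0 < j \<Longrightarrow> j < m \<Longrightarrow> g [^] j \<notin> K"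
    and root: "c ^ m = \<chi> (g [^] m)"
begin

definition ext_carrier :: "'a set" where
  "ext_carrier = {k \<otimes> g [^] i | k i. k \<in> K \<and> i < m}"

definition ext_char :: "'a \<Rightarrow> 'k" where
  "ext_char y = (if y \<in> ext_carrier
     then THE v. \<exists>k i. k \<in> K \<and> i < m \<and> y = k \<otimes> g [^] i \<and> v = \<chi> k * c ^ i else 0)"

lemma K_carrier: "k \<in> K \<Longrightarrow> k \<in> carrier G"
  using subgroup.mem_carrier[OF subgroup_K] .

lemma ext_repr_unique:
  assumes "k \<in> K" "k' \<in> K" "i < m" "j < m" "k \<otimes> g [^] i = k' \<otimes> g [^] j"
  shows "k = k' \<and> i = j"
proof -
  have unique: "k = k' \<and> i = j"
    if "k \<in> K" "k' \<in> K" "j < m" "i \<le> j" "k \<otimes> g [^] i = k' \<otimes> g [^] j" for k k' i j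
  proof -
    have "k' \<otimes> g [^] j = (k' \<otimes> g [^] (j - i)) \<otimes> g [^] i"
      using that K_carrier g by (simp add: m_assoc nat_pow_mult)
    hence k: "k = k' \<otimes> g [^] (j - i)"
      using that K_carrier g by simp
    hence "g [^] (j - i) = inv k' \<otimes> k"
      using that(2) K_carrier g by (simp add: m_assoc[symmetric])
    also have "\<dots> \<in> K"
      using that(1,2) subgroup_K by (simp add: subgroup.m_closed subgroup.m_inv_closed)
    finally have "j - i = 0" using pow_notin[of "j - i"] that(3) by linarith
    thus ?thesis using k that(2,4) K_carrier by simp
  qed
  show ?thesis
    using unique[of k k' j i] unique[of k' k i j] assms by (cases "i \<le> j") auto
qed

lemma ext_char_eq:
  assumes "k \<in> K" "i < m"
  shows "ext_char (k \<otimes> g [^] i) = \<chi> k * c ^ i"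
proof -
  have "k \<otimes> g [^] i \<in> ext_carrier" using assms unfolding ext_carrier_def by blast
  moreover have "(THE v. \<exists>k' i'. k' \<in> K \<and> i' < m \<and> k \<otimes> g [^] i = k' \<otimes> g [^] i'
                        \<and> v = \<chi> k' * c ^ i') = \<chi> k * c ^ i"
    using assms ext_repr_unique[OF assms(1) _ assms(2)] by (intro the_equality) blast+
  ultimately show ?thesis by (simp add: ext_char_def)
qed

lemma K_subset_ext_carrier: "K \<subseteq> ext_carrier"
proof
  fix k assume "k \<in> K"
  hence "k = k \<otimes> g [^] (0::nat) \<and> k \<in> K \<and> 0 < m" using K_carrier m_pos by simp
  thus "k \<in> ext_carrier" unfolding ext_carrier_def by blast
qed

lemma ext_char_restrict: "k \<in> K \<Longrightarrow> ext_char k = \<chi> k"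
  using ext_char_eq[of k 0] K_carrier m_pos by simp

lemma g_in_ext_carrier: "g \<in> ext_carrier" and ext_char_g: "ext_char g = c"
proof -
  have "g \<in> ext_carrier \<and> ext_char g = c"
  proof (cases "m = 1")
    case True
    hence "g \<in> K" using pow_m_in g by simp
    thus ?thesis using K_subset_ext_carrier ext_char_restrict root True g by auto
  next
    case False
    hence "1 < m" using m_pos by simp
    moreover have g1: "g = \<one> \<otimes> g [^] (1::nat)" using g by simp
    moreover have "\<one> \<in> K" using subgroup.one_closed[OF subgroup_K] .
    ultimately have "g \<in> ext_carrier"
      unfolding ext_carrier_def by (intro CollectI exI[of _ \<one>] exI[of _ "1::nat"]) simp
    moreover have "ext_char g = c"
      using ext_char_eq[of \<one> 1] character_one[OF subgroup_K \<chi>] g1 \<open>1 < m\<close> \<open>\<one> \<in> K\<close>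
      by simp
    ultimately show ?thesis ..
  qed
  thus "g \<in> ext_carrier" "ext_char g = c" by auto
qed

text \<open>Exponents of \<open>g\<close> are reduced modulo \<open>m\<close> by moving \<open>g [^] m\<close> into \<open>K\<close>; the root
  \<open>c\<close> of \<open>\<chi> (g [^] m)\<close> makes this compatible with \<open>ext_char\<close>.\<close>
lemma ext_mult:
  assumes "k \<in> K" "k' \<in> K" "i < m" "j < m"
  shows "\<exists>k'' l. k'' \<in> K \<and> l < m \<and> (k \<otimes> g [^] i) \<otimes> (k' \<otimes> g [^] j) = k'' \<otimes> g [^] l
           \<and> \<chi> k'' * c ^ l = (\<chi> k * c ^ i) * (\<chi> k' * c ^ j)"
proof -
  have kk': "k \<otimes> k' \<in> K" using subgroup.m_closed[OF subgroup_K assms(1,2)] .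
  have prod: "(k \<otimes> g [^] i) \<otimes> (k' \<otimes> g [^] j) = (k \<otimes> k') \<otimes> g [^] (i + j)"
    using assms K_carrier g by (simp add: m_ac nat_pow_mult[symmetric])
  show ?thesis
  proof (cases "i + j < m")
    case True
    thus ?thesis using prod kk' character_hom[OF \<chi> assms(1,2)]
      by (intro exI[of _ "k \<otimes> k'"] exI[of _ "i + j"]) (simp add: power_add)
  next
    case False
    have "g [^] (i + j) = g [^] m \<otimes> g [^] (i + j - m)"
      using False g by (simp add: nat_pow_mult)
    hence "(k \<otimes> g [^] i) \<otimes> (k' \<otimes> g [^] j) = ((k \<otimes> k') \<otimes> g [^] m) \<otimes> g [^] (i + j - m)"
      using prod assms K_carrier g by (simp add: m_assoc)
    moreover have "(k \<otimes> k') \<otimes> g [^] m \<in> K"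
      using subgroup.m_closed[OF subgroup_K kk' pow_m_in] .
    moreover have "\<chi> ((k \<otimes> k') \<otimes> g [^] m) * c ^ (i + j - m) = (\<chi> k * c ^ i) * (\<chi> k' * c ^ j)"
    proof -
      have "\<chi> ((k \<otimes> k') \<otimes> g [^] m) * c ^ (i + j - m) = \<chi> k * \<chi> k' * (c ^ m * c ^ (i + j - m))"
        using character_hom[OF \<chi> kk' pow_m_in] character_hom[OF \<chi> assms(1,2)] root
        by (simp add: mult.assoc)
      also have "\<dots> = (\<chi> k * c ^ i) * (\<chi> k' * c ^ j)"
        using False by (simp add: power_add[symmetric] mult_ac)
      finally show ?thesis .
    qed
    moreover have "i + j - m < m" using assms(3,4) by simp
    ultimately show ?thesis by blast
  qed
qed

lemma subgroup_ext_carrier: "subgroup ext_carrier G"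
proof (rule subgroupI)
  show "ext_carrier \<subseteq> carrier G" unfolding ext_carrier_def using K_carrier g by auto
  show "ext_carrier \<noteq> {}" using g_in_ext_carrier by blast
next
  fix a b assume "a \<in> ext_carrier" "b \<in> ext_carrier"
  thus "a \<otimes> b \<in> ext_carrier" using ext_mult unfolding ext_carrier_def by blast
next
  fix a assume "a \<in> ext_carrier"
  then obtain k i where a: "k \<in> K" "i < m" "a = k \<otimes> g [^] i" unfolding ext_carrier_def by blast
  show "inv a \<in> ext_carrier"
  proof (cases "i = 0")
    case True
    hence "inv a = inv k \<otimes> g [^] (0::nat)" using a K_carrier by simp
    thus ?thesis using subgroup.m_inv_closed[OF subgroup_K a(1)] m_pos
      unfolding ext_carrier_def by blast
  next
    case False
    have "g [^] m = g [^] i \<otimes> g [^] (m - i)" using a(2) g by (simp add: nat_pow_mult)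
    hence "inv (g [^] i) = inv (g [^] m) \<otimes> g [^] (m - i)"
      using g by (simp add: inv_mult m_assoc)
    hence "inv a = (inv k \<otimes> inv (g [^] m)) \<otimes> g [^] (m - i)"
      using a K_carrier g by (simp add: inv_mult m_assoc)
    moreover have "inv k \<otimes> inv (g [^] m) \<in> K"
      using subgroup_K a(1) pow_m_in by (simp add: subgroup.m_closed subgroup.m_inv_closed)
    moreover have "m - i < m" using False m_pos by simp
    ultimately show ?thesis unfolding ext_carrier_def by blast
  qed
qed

lemma ext_char_in_characters: "ext_char \<in> characters G ext_carrier"
proof -
  have "c \<noteq> 0"
    using root m_pos character_nonzero[OF \<chi> pow_m_in] by (metis zero_power)
  hence "ext_char a \<noteq> 0" if "a \<in> ext_carrier" for a
    using that ext_char_eq character_nonzero[OF \<chi>] unfolding ext_carrier_def by auto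
  moreover have "ext_char (a \<otimes> b) = ext_char a * ext_char b"
    if ab: "a \<in> ext_carrier" "b \<in> ext_carrier" for a b
  proof -
    obtain k i k' j where "k \<in> K" "i < m" "a = k \<otimes> g [^] i" "k' \<in> K" "j < m" "b = k' \<otimes> g [^] j"
      using ab unfolding ext_carrier_def by blast
    with ext_mult show ?thesis by (metis ext_char_eq)
  qed
  ultimately show ?thesis unfolding characters_def ext_char_def by auto
qed

end

context comm_group
begin

lemma exists_least_pow_in_subgroup:
  assumes "finite (carrier G)" "subgroup K G" "g \<in> carrier G"
  shows "\<exists>m::nat. 0 < m \<and> g [^] m \<in> K \<and> (\<forall>j. 0 < j \<and> j < m \<longrightarrow> g [^] j \<notin> K)"
proof -
  have "g [^] order G \<in> K"
    using pow_order_eq_1[OF assms(3)] subgroup.one_closed[OF assms(2)] by simp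
  moreover have "0 < order G" using assms(1) order_gt_0_iff_finite by blast
  ultimately have ex: "\<exists>m::nat. 0 < m \<and> g [^] m \<in> K" by blast
  show ?thesis
    using LeastI_ex[OF ex] not_less_Least[of _ "\<lambda>m. 0 < m \<and> g [^] m \<in> K"] by blast
qed

lemma characters_extend:
  fixes \<chi> :: "'a \<Rightarrow> 'k::alg_closed_field"
  assumes "finite (carrier G)" "subgroup K G" "\<chi> \<in> characters G K"
  shows "\<exists>\<psi>\<in>characters G (carrier G). \<forall>x\<in>K. \<psi> x = \<chi> x"
  using assms(2,3)
proof (induction "card (carrier G - K)" arbitrary: K \<chi> rule: less_induct)
  case less
  show ?case
  proof (cases "K = carrier G")
    case True
    with less.prems(2) show ?thesis by blast
  next
    case False
    then obtain g where g: "g \<in> carrier G" "g \<notin> K"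
      using subgroup.subset[OF less.prems(1)] by blast
    obtain m :: nat where m: "0 < m" "g [^] m \<in> K" "\<And>j. 0 < j \<Longrightarrow> j < m \<Longrightarrow> g [^] j \<notin> K"
      using exists_least_pow_in_subgroup[OF assms(1) less.prems(1) g(1)] by blast
    obtain c where c: "c ^ m = \<chi> (g [^] m)" using nth_root_exists[OF m(1)] by blast
    interpret E: character_extension G K \<chi> g m c
    proof (intro character_extension.intro character_extension_axioms.intro)
      show "comm_group G" by unfold_locales
    qed (fact less.prems g(1) m c)+
    have "carrier G - E.ext_carrier \<subset> carrier G - K"
      using E.K_subset_ext_carrier E.g_in_ext_carrier g by blast
    hence "card (carrier G - E.ext_carrier) < card (carrier G - K)"
      using assms(1) by (meson finite_Diff psubset_card_mono)
    then obtain \<psi> where \<psi>: "\<psi> \<in> characters G (carrier G)" "\<forall>x\<in>E.ext_carrier. \<psi> x = E.ext_char x"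
      using less.hyps[OF _ E.subgroup_ext_carrier E.ext_char_in_characters] by blast
    have "\<psi> x = \<chi> x" if "x \<in> K" for x
    proof -
      have "x \<in> E.ext_carrier" using that E.K_subset_ext_carrier by blast
      hence "\<psi> x = E.ext_char x" using \<psi>(2) by blast
      also have "\<dots> = \<chi> x" using E.ext_char_restrict[OF that] .
      finally show ?thesis .
    qed
    with \<psi>(1) show ?thesis by blast
  qed
qed

lemma exists_character_ne_one:
  assumes fin: "finite (carrier G)" and h: "h \<in> carrier G" "h \<noteq> \<one>"
  shows "\<exists>\<chi>\<in>characters G (carrier G). \<chi> h \<noteq> (1::'k::{alg_closed_field,field_char_0})"
proof -
  obtain m :: nat where m: "0 < m" "h [^] m \<in> {\<one>}" "\<And>j. 0 < j \<Longrightarrow> j < m \<Longrightarrow> h [^] j \<notin> {\<one>}"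
    using exists_least_pow_in_subgroup[OF fin triv_subgroup h(1)] by blast
  have "m \<noteq> 1" using m(2) h by auto
  then obtain c :: 'k where c: "(\<Sum>i\<le>m - 1. c ^ i) = 0"
    using alg_closed[of "m - 1" "\<lambda>_. 1"] m(1) by auto
  have "{..m - 1} = {..<m}" using m(1) by auto
  with c have geom: "(\<Sum>i<m. c ^ i) = 0" by simp
  txt \<open>\<open>c\<close> is an \<open>m\<close>-th root of unity other than \<open>1\<close>, since \<open>m \<noteq> 0\<close> in characteristic 0.\<close>
  hence "c ^ m = char_one {\<one>} (h [^] m)" using one_diff_power_eq[of c m] m(2) by (simp add: char_one_def)
  moreover have "c \<noteq> 1" using geom m(1) by auto
  interpret E: character_extension G "{\<one>}" "char_one {\<one>}" h m c
  proof (intro character_extension.intro character_extension_axioms.intro)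
    show "comm_group G" by unfold_locales
  qed (fact triv_subgroup char_one_in_characters[OF triv_subgroup] h(1) m \<open>c ^ m = _\<close>)+
  obtain \<psi> where \<psi>: "\<psi> \<in> characters G (carrier G)" "\<forall>x\<in>E.ext_carrier. \<psi> x = E.ext_char x"
    using characters_extend[OF fin E.subgroup_ext_carrier E.ext_char_in_characters] by blast
  have "\<psi> h = c" using \<psi>(2) E.g_in_ext_carrier E.ext_char_g by simp
  with \<psi>(1) \<open>c \<noteq> 1\<close> show ?thesis by blast
qed

lemma sum_character:
  assumes "\<chi> \<in> characters G (carrier G)"
  shows "(\<Sum>x\<in>carrier G. \<chi> x) = (if \<chi> = char_one (carrier G) then of_nat (order G) else 0)"
proof (cases "\<chi> = char_one (carrier G)")
  case True
  thus ?thesis by (simp add: char_one_def order_def)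
next
  case False
  then obtain a where a: "a \<in> carrier G" "\<chi> a \<noteq> 1"
    using characters_eqI[OF assms char_one_in_characters[OF subgroup_self]]
    by (auto simp: char_one_def)
  have "(\<Sum>x\<in>carrier G. \<chi> x) = (\<Sum>x\<in>carrier G. \<chi> (a \<otimes> x))"
    by (rule sum_mult_left_reindex[OF a(1)])
  also have "\<dots> = \<chi> a * (\<Sum>x\<in>carrier G. \<chi> x)"
    by (simp add: sum_distrib_left character_hom[OF assms a(1)])
  finally have "(1 - \<chi> a) * (\<Sum>x\<in>carrier G. \<chi> x) = 0" by (simp add: algebra_simps)
  thus ?thesis using a(2) False by simp
qed

lemma roots_of_unity_finite:
  assumes "0 < n"
  shows "finite {z :: 'k::field. z ^ n = 1}"
proof -
  let ?p = "Polynomial.monom (1::'k) n - 1"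
  have "poly ?p 0 \<noteq> 0" using assms by (simp add: poly_monom power_0_left)
  hence "?p \<noteq> 0" by auto
  hence "finite {z. poly ?p z = 0}" by (rule poly_roots_finite)
  thus ?thesis by (simp add: poly_monom)
qed

lemma finite_characters:
  assumes "finite (carrier G)"
  shows "finite (characters G (carrier G) :: ('a \<Rightarrow> 'k::field) set)"
proof -
  let ?C = "characters G (carrier G) :: ('a \<Rightarrow> 'k) set"
  let ?R = "{z :: 'k. z ^ order G = 1}"
  have "restrict \<chi> (carrier G) \<in> carrier G \<rightarrow>\<^sub>E ?R" if \<chi>: "\<chi> \<in> ?C" for \<chi>
  proof -
    have "\<chi> x ^ n = \<chi> (x [^] n)" if "x \<in> carrier G" for x n
      using that character_hom[OF \<chi>] character_one[OF subgroup_self \<chi>] by (induction n) auto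
    thus ?thesis using pow_order_eq_1 character_one[OF subgroup_self \<chi>] by auto
  qed
  hence "(\<lambda>\<chi>. restrict \<chi> (carrier G)) ` ?C \<subseteq> carrier G \<rightarrow>\<^sub>E ?R" by blast
  moreover have "finite (carrier G \<rightarrow>\<^sub>E ?R)"
    using assms roots_of_unity_finite order_gt_0_iff_finite by (blast intro: finite_PiE)
  ultimately have "finite ((\<lambda>\<chi>. restrict \<chi> (carrier G)) ` ?C)" by (rule finite_subset)
  moreover have "inj_on (\<lambda>\<chi>. restrict \<chi> (carrier G)) ?C"
    by (rule inj_onI, rule characters_eqI, assumption+) (metis restrict_apply')
  ultimately show ?thesis by (rule finite_imageD)
qed

lemma sum_characters_at:
  assumes fin: "finite (carrier G)" and x: "x \<in> carrier G"
  shows "(\<Sum>\<chi>\<in>characters G (carrier G). \<chi> x :: 'k::{alg_closed_field,field_char_0})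
     = (if x = \<one> then of_nat (card (characters G (carrier G) :: ('a \<Rightarrow> 'k) set)) else 0)"
proof (cases "x = \<one>")
  case True
  have "(\<Sum>\<chi>\<in>characters G (carrier G). \<chi> \<one> :: 'k)
      = (\<Sum>\<chi>\<in>(characters G (carrier G) :: ('a \<Rightarrow> 'k) set). 1)"
    using character_one[OF subgroup_self] by (intro sum.cong) auto
  thus ?thesis using True by simp
next
  case False
  let ?C = "characters G (carrier G) :: ('a \<Rightarrow> 'k) set"
  obtain \<alpha> :: "'a \<Rightarrow> 'k" where \<alpha>: "\<alpha> \<in> ?C" "\<alpha> x \<noteq> 1"
    using exists_character_ne_one[OF fin x False] by blast
  have "(\<Sum>\<chi>\<in>?C. \<chi> x) = (\<Sum>\<chi>\<in>?C. char_mult (carrier G) \<alpha> \<chi> x)"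
    by (rule characters_reindex[OF subgroup_self \<alpha>(1)])
  also have "\<dots> = \<alpha> x * (\<Sum>\<chi>\<in>?C. \<chi> x)"
    using x by (simp add: sum_distrib_left char_mult_def)
  finally have "(1 - \<alpha> x) * (\<Sum>\<chi>\<in>?C. \<chi> x) = 0" by (simp add: algebra_simps)
  thus ?thesis using \<alpha>(2) False by simp
qed

text \<open>Both orthogonality relations evaluate the double sum \<open>\<Sum>x \<Sum>\<chi>. \<chi> x\<close>.\<close>
lemma card_characters:
  assumes fin: "finite (carrier G)"
  shows "card (characters G (carrier G) :: ('a \<Rightarrow> 'k::{alg_closed_field,field_char_0}) set) = order G"
proof -
  let ?C = "characters G (carrier G) :: ('a \<Rightarrow> 'k) set"
  have "(of_nat (card ?C) :: 'k) = (\<Sum>x\<in>carrier G. if x = \<one> then of_nat (card ?C) else 0)"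
    using fin by simp
  also have "\<dots> = (\<Sum>x\<in>carrier G. \<Sum>\<chi>\<in>?C. \<chi> x)"
    by (rule sum.cong[OF refl], rule sum_characters_at[OF fin, symmetric])
  also have "\<dots> = (\<Sum>\<chi>\<in>?C. \<Sum>x\<in>carrier G. \<chi> x)"
    by (rule sum.swap)
  also have "\<dots> = (\<Sum>\<chi>\<in>?C. if \<chi> = char_one (carrier G) then of_nat (order G) else 0)"
    by (rule sum.cong[OF refl], rule sum_character)
  also have "\<dots> = of_nat (order G)"
  proof -
    have "char_one (carrier G) \<in> ?C" by (rule char_one_in_characters[OF subgroup_self])
    thus ?thesis using finite_characters[OF fin, where 'k = 'k] by simp
  qed
  finally show ?thesis by simp
qed

lemma sum_characters:
  assumes "finite (carrier G)" "x \<in> carrier G"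
  shows "(\<Sum>\<chi>\<in>characters G (carrier G). \<chi> x :: 'k::{alg_closed_field,field_char_0})
     = (if x = \<one> then of_nat (order G) else 0)"
  by (simp only: sum_characters_at[OF assms] card_characters[OF assms(1)])

text \<open>The sum \<open>s h\<close> is an eigenvector of translation by every \<open>\<beta>\<close>, with eigenvalue
  \<open>\<phi> \<beta> * \<beta> (inv h)\<close>, and the \<open>s h\<close> do not all vanish.\<close>
lemma dual_character_is_evaluation:
  fixes \<phi> :: "('a \<Rightarrow> 'k::{alg_closed_field,field_char_0}) \<Rightarrow> 'k"
  assumes fin: "finite (carrier G)"
    and mult: "\<And>\<alpha> \<beta>. \<alpha> \<in> characters G (carrier G) \<Longrightarrow> \<beta> \<in> characters G (carrier G) \<Longrightarrow>
                  \<phi> (char_mult (carrier G) \<alpha> \<beta>) = \<phi> \<alpha> * \<phi> \<beta>"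
    and one: "\<phi> (char_one (carrier G)) = 1"
  shows "\<exists>h\<in>carrier G. \<forall>\<beta>\<in>characters G (carrier G). \<phi> \<beta> = \<beta> h"
proof -
  let ?C = "characters G (carrier G) :: ('a \<Rightarrow> 'k) set"
  define s where "s h = (\<Sum>\<gamma>\<in>?C. \<phi> \<gamma> * \<gamma> (inv h))" for h
  have "(\<Sum>h\<in>carrier G. s h) = (\<Sum>\<gamma>\<in>?C. \<phi> \<gamma> * (\<Sum>h\<in>carrier G. \<gamma> (inv h)))"
    unfolding s_def by (subst sum.swap) (simp add: sum_distrib_left)
  also have "\<dots> = (\<Sum>\<gamma>\<in>?C. \<phi> \<gamma> * (\<Sum>h\<in>carrier G. \<gamma> h))"
    by (simp add: sum_inv_reindex[symmetric])
  also have "\<dots> = (\<Sum>\<gamma>\<in>?C. if \<gamma> = char_one (carrier G) then of_nat (order G) else 0)"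
  proof (rule sum.cong[OF refl])
    fix \<gamma> assume "\<gamma> \<in> ?C"
    thus "\<phi> \<gamma> * (\<Sum>h\<in>carrier G. \<gamma> h) = (if \<gamma> = char_one (carrier G) then of_nat (order G) else 0)"
      using sum_character[OF \<open>\<gamma> \<in> ?C\<close>] one by simp
  qed
  also have "\<dots> = of_nat (order G)"
  proof -
    have "char_one (carrier G) \<in> ?C" by (rule char_one_in_characters[OF subgroup_self])
    thus ?thesis using finite_characters[OF fin, where 'k = 'k] by simp
  qed
  also have "\<dots> \<noteq> 0" using fin order_gt_0_iff_finite by simp
  finally obtain h where h: "h \<in> carrier G" "s h \<noteq> 0" by (meson sum.neutral)
  have "\<phi> \<beta> = \<beta> h" if \<beta>: "\<beta> \<in> ?C" for \<beta>
  proof -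
    have "s h = (\<Sum>\<gamma>\<in>?C. \<phi> (char_mult (carrier G) \<beta> \<gamma>) * char_mult (carrier G) \<beta> \<gamma> (inv h))"
      unfolding s_def by (rule characters_reindex[OF subgroup_self \<beta>])
    also have "\<dots> = \<phi> \<beta> * \<beta> (inv h) * s h"
      using h(1) mult[OF \<beta>] by (simp add: s_def sum_distrib_left char_mult_def mult_ac)
    finally have "\<phi> \<beta> * \<beta> (inv h) = 1" using h(2) by simp
    thus ?thesis
      using character_inv[OF subgroup_self \<beta> h(1)] character_nonzero[OF \<beta> h(1)]
      by (simp add: field_simps)
  qed
  with h(1) show ?thesis by blast
qed

end

section \<open>The group algebra\<close>

definition conv :: "('a, 'b) monoid_scheme \<Rightarrow> ('a \<Rightarrow> 'k::field) \<Rightarrow> ('a \<Rightarrow> 'k) \<Rightarrow> ('a \<Rightarrow> 'k)" where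
  "conv G a b = (\<lambda>g. if g \<in> carrier G then \<Sum>c\<in>carrier G. a c * b (inv\<^bsub>G\<^esub> c \<otimes>\<^bsub>G\<^esub> g) else 0)"

definition supported_in :: "'a set \<Rightarrow> ('a \<Rightarrow> 'k::zero) \<Rightarrow> bool" where
  "supported_in S a \<longleftrightarrow> (\<forall>x. x \<notin> S \<longrightarrow> a x = 0)"

context group
begin

lemma conv_assoc: "conv G (conv G a b) c = conv G a (conv G b c)"
proof
  fix g show "conv G (conv G a b) c g = conv G a (conv G b c) g"
  proof (cases "g \<in> carrier G")
    case False thus ?thesis by (simp add: conv_def)
  next
    case g: True
    have inner: "(\<Sum>x\<in>carrier G. b (inv d \<otimes> x) * c (inv x \<otimes> g)) = conv G b c (inv d \<otimes> g)"
      if d: "d \<in> carrier G" for d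
    proof -
      have "(\<Sum>x\<in>carrier G. b (inv d \<otimes> x) * c (inv x \<otimes> g))
          = (\<Sum>e\<in>carrier G. b (inv d \<otimes> (d \<otimes> e)) * c (inv (d \<otimes> e) \<otimes> g))"
        by (rule sum_mult_left_reindex[OF d])
      also have "\<dots> = (\<Sum>e\<in>carrier G. b e * c (inv e \<otimes> (inv d \<otimes> g)))"
        using d g by (intro sum.cong) (simp_all add: m_assoc[symmetric] inv_mult_group)
      finally show ?thesis using d g by (simp add: conv_def)
    qed
    have "conv G (conv G a b) c g
        = (\<Sum>x\<in>carrier G. \<Sum>d\<in>carrier G. a d * (b (inv d \<otimes> x) * c (inv x \<otimes> g)))"
      using g by (simp add: conv_def sum_distrib_right mult.assoc)
    also have "\<dots> = (\<Sum>d\<in>carrier G. a d * (\<Sum>x\<in>carrier G. b (inv d \<otimes> x) * c (inv x \<otimes> g)))"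
      by (subst sum.swap) (simp add: sum_distrib_left)
    also have "\<dots> = conv G a (conv G b c) g"
      using g by (simp add: conv_def inner)
    finally show ?thesis .
  qed
qed

lemma conv_basis_el_left:
  assumes "finite (carrier G)" "x \<in> carrier G"
  shows "conv G (basis_el x) a = (\<lambda>g. if g \<in> carrier G then a (inv x \<otimes> g) else 0)"
  using assms by (auto simp: conv_def basis_el_def if_distrib[of "\<lambda>t. t * _"] sum.delta' cong: if_cong)

lemma conv_basis_el_right:
  assumes "finite (carrier G)" "x \<in> carrier G"
  shows "conv G a (basis_el x) = (\<lambda>g. if g \<in> carrier G then a (g \<otimes> inv x) else 0)"
proof
  fix g show "conv G a (basis_el x) g = (if g \<in> carrier G then a (g \<otimes> inv x) else 0)"
  proof (cases "g \<in> carrier G")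
    case False thus ?thesis by (simp add: conv_def)
  next
    case g: True
    have "inv c \<otimes> g = x \<longleftrightarrow> c = g \<otimes> inv x" if "c \<in> carrier G" for c
      using that g assms(2) by (simp add: inv_solve_left' inv_solve_right)
    hence "conv G a (basis_el x) g = (\<Sum>c\<in>carrier G. if c = g \<otimes> inv x then a c else 0)"
      using g by (auto simp: conv_def basis_el_def intro!: sum.cong)
    thus ?thesis using assms g by (simp add: sum.delta')
  qed
qed

lemma conv_one_left: "finite (carrier G) \<Longrightarrow> supported_in (carrier G) a \<Longrightarrow> conv G (basis_el \<one>) a = a"
  by (auto simp: conv_basis_el_left supported_in_def)

lemma conv_one_right: "finite (carrier G) \<Longrightarrow> supported_in (carrier G) a \<Longrightarrow> conv G a (basis_el \<one>) = a"
  by (auto simp: conv_basis_el_right supported_in_def)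

lemma conv_sum_left: "conv G (\<lambda>g. \<Sum>i\<in>I. f i g) b = (\<lambda>g. \<Sum>i\<in>I. conv G (f i) b g)"
  by (rule ext) (auto simp: conv_def sum_distrib_right intro: sum.swap)

lemma conv_sum_right: "conv G b (\<lambda>g. \<Sum>i\<in>I. f i g) = (\<lambda>g. \<Sum>i\<in>I. conv G b (f i) g)"
  by (rule ext) (auto simp: conv_def sum_distrib_left intro: sum.swap)

lemma conv_smult_left: "conv G (\<lambda>g. c * a g) b = (\<lambda>g. c * conv G a b g)"
  by (rule ext) (auto simp: conv_def sum_distrib_left mult.assoc)

lemma conv_smult_right: "conv G b (\<lambda>g. c * a g) = (\<lambda>g. c * conv G b a g)"
  by (rule ext) (auto simp: conv_def sum_distrib_left mult_ac)

lemma conv_inverse_unique: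
  assumes "finite (carrier G)"
    and "supported_in (carrier G) y" "conv G x y = basis_el \<one>" "conv G y x = basis_el \<one>"
    and "supported_in (carrier G) z" "conv G x z = basis_el \<one>" "conv G z x = basis_el \<one>"
  shows "y = z"
proof -
  have "y = conv G (conv G z x) y" using conv_one_left[OF assms(1,2)] assms(7) by simp
  also have "\<dots> = conv G z (conv G x y)" by (rule conv_assoc)
  also have "\<dots> = z" using conv_one_right[OF assms(1,5)] assms(3) by simp
  finally show ?thesis .
qed

lemma conv_commute_imp_conj_invariant:
  assumes "finite (carrier G)" "x \<in> carrier G" "y \<in> carrier G"
    and "conv G u (basis_el x) = conv G (basis_el x) u"
  shows "u (x \<otimes> y \<otimes> inv x) = u y"
proof -
  have "u (x \<otimes> y \<otimes> inv x) = conv G u (basis_el x) (x \<otimes> y)"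
    using assms(1-3) by (simp add: conv_basis_el_right)
  also have "\<dots> = conv G (basis_el x) u (x \<otimes> y)" using assms(4) by simp
  also have "\<dots> = u y" using assms(1-3) by (simp add: conv_basis_el_left m_assoc[symmetric])
  finally show ?thesis .
qed

end

section \<open>The tensor square of the group algebra\<close>

lemma tone_eq_basis_el: "tone G = basis_el \<one>\<^bsub>G \<times>\<times> G\<^esub>"
  by (auto simp: tone_def basis_el_def)

lemma comult_basis_el: "x \<in> carrier G \<Longrightarrow> comult G (basis_el x) = tensor (basis_el x) (basis_el x)"
  by (auto simp: comult_def tensor_def basis_el_def)

definition slice :: "('a, 'b) monoid_scheme \<Rightarrow> ('a \<Rightarrow> 'k::field) \<Rightarrow> ('a \<times> 'a \<Rightarrow> 'k) \<Rightarrow> ('a \<Rightarrow> 'k)" where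
  "slice G \<eta> z = (\<lambda>b. if b \<in> carrier G then \<Sum>a\<in>carrier G. z (a, b) * \<eta> a else 0)"

lemma slice_sum: "slice G \<eta> (\<lambda>p. \<Sum>i\<in>I. f i p) = (\<lambda>b. \<Sum>i\<in>I. slice G \<eta> (f i) b)"
  by (rule ext) (auto simp: slice_def sum_distrib_right intro: sum.swap)

lemma slice_smult: "slice G \<eta> (\<lambda>p. c * z p) = (\<lambda>b. c * slice G \<eta> z b)"
  by (rule ext) (auto simp: slice_def sum_distrib_left mult.assoc)

lemma comult_swap: "comult G a \<circ> prod.swap = comult G a"
  by (auto simp: comult_def)

lemma slice_tensor:
  assumes "supported_in (carrier G) b"
  shows "slice G \<eta> (tensor a b) = (\<lambda>g. (\<Sum>x\<in>carrier G. a x * \<eta> x) * b g)"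
proof
  fix g show "slice G \<eta> (tensor a b) g = (\<Sum>x\<in>carrier G. a x * \<eta> x) * b g"
    using assms by (cases "g \<in> carrier G")
      (auto simp: slice_def tensor_def supported_in_def sum_distrib_left sum_distrib_right mult_ac)
qed

context group
begin

lemma tmult_eq_conv: "tmult G x y = conv (G \<times>\<times> G) x y"
proof
  fix p :: "'a \<times> 'a"
  show "tmult G x y p = conv (G \<times>\<times> G) x y p"
    by (cases p) (auto simp: tmult_def conv_def inv_DirProd[OF is_group is_group] intro!: sum.cong)
qed

lemma tmult_tensor: "tmult G (tensor a b) (tensor c d) = tensor (conv G a c) (conv G b d)"
proof
  fix p :: "'a \<times> 'a"
  obtain x y where p: "p = (x, y)" by fastforce
  show "tmult G (tensor a b) (tensor c d) p = tensor (conv G a c) (conv G b d) p"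
  proof (cases "x \<in> carrier G \<and> y \<in> carrier G")
    case False thus ?thesis using p by (auto simp: tmult_def conv_def tensor_def)
  next
    case True
    have "tmult G (tensor a b) (tensor c d) p
        = (\<Sum>(c', d')\<in>carrier G \<times> carrier G. (a c' * c (inv c' \<otimes> x)) * (b d' * d (inv d' \<otimes> y)))"
      using True p by (auto simp: tmult_def tensor_def mult_ac intro!: sum.cong)
    also have "\<dots> = (\<Sum>c'\<in>carrier G. a c' * c (inv c' \<otimes> x)) * (\<Sum>d'\<in>carrier G. b d' * d (inv d' \<otimes> y))"
      by (simp add: sum_product sum.cartesian_product)
    also have "\<dots> = tensor (conv G a c) (conv G b d) p" using True p by (simp add: tensor_def conv_def)
    finally show ?thesis .
  qed
qed

lemma tmult_swap: "tmult G (z \<circ> prod.swap) (w \<circ> prod.swap) = tmult G z w \<circ> prod.swap"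
proof
  fix p :: "'a \<times> 'a"
  obtain x y where p: "p = (x, y)" by fastforce
  let ?S = "carrier G"
  have "(\<Sum>(c, d)\<in>?S \<times> ?S. z (d, c) * w (inv d \<otimes> y, inv c \<otimes> x))
      = (\<Sum>c\<in>?S. \<Sum>d\<in>?S. z (d, c) * w (inv d \<otimes> y, inv c \<otimes> x))"
    by (rule sum.cartesian_product[symmetric])
  also have "\<dots> = (\<Sum>d\<in>?S. \<Sum>c\<in>?S. z (d, c) * w (inv d \<otimes> y, inv c \<otimes> x))"
    by (rule sum.swap)
  also have "\<dots> = (\<Sum>(d, c)\<in>?S \<times> ?S. z (d, c) * w (inv d \<otimes> y, inv c \<otimes> x))"
    by (rule sum.cartesian_product)
  finally show "tmult G (z \<circ> prod.swap) (w \<circ> prod.swap) p = (tmult G z w \<circ> prod.swap) p"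
    using p by (simp add: tmult_def)
qed

lemma slice_tmult:
  assumes \<eta>: "\<eta> \<in> characters G (carrier G)"
  shows "slice G \<eta> (tmult G z w) = conv G (slice G \<eta> z) (slice G \<eta> w)"
proof
  fix b show "slice G \<eta> (tmult G z w) b = conv G (slice G \<eta> z) (slice G \<eta> w) b"
  proof (cases "b \<in> carrier G")
    case False thus ?thesis by (simp add: slice_def conv_def)
  next
    case b: True
    let ?S = "carrier G"
    have shift: "(\<Sum>a\<in>?S. w (inv c \<otimes> a, e) * \<eta> a) = \<eta> c * slice G \<eta> w e"
      if "c \<in> ?S" "e \<in> ?S" for c e
    proof -
      have "(\<Sum>a\<in>?S. w (inv c \<otimes> a, e) * \<eta> a) = (\<Sum>a\<in>?S. w (inv c \<otimes> (c \<otimes> a), e) * \<eta> (c \<otimes> a))"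
        by (rule sum_mult_left_reindex[OF that(1)])
      also have "\<dots> = (\<Sum>a\<in>?S. \<eta> c * (w (a, e) * \<eta> a))"
        using that character_hom[OF \<eta>] by (intro sum.cong) (simp_all add: m_assoc[symmetric])
      finally show ?thesis using that(2) by (simp add: slice_def sum_distrib_left)
    qed
    have "slice G \<eta> (tmult G z w) b
        = (\<Sum>a\<in>?S. (\<Sum>c\<in>?S. \<Sum>d\<in>?S. z (c, d) * w (inv c \<otimes> a, inv d \<otimes> b)) * \<eta> a)"
      using b by (simp add: slice_def tmult_def sum.cartesian_product)
    also have "\<dots> = (\<Sum>a\<in>?S. \<Sum>c\<in>?S. \<Sum>d\<in>?S. z (c, d) * (w (inv c \<otimes> a, inv d \<otimes> b) * \<eta> a))"
      by (simp add: sum_distrib_right mult.assoc)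
    also have "\<dots> = (\<Sum>c\<in>?S. \<Sum>d\<in>?S. \<Sum>a\<in>?S. z (c, d) * (w (inv c \<otimes> a, inv d \<otimes> b) * \<eta> a))"
      by (subst sum.swap) (rule sum.cong[OF refl], rule sum.swap)
    also have "\<dots> = (\<Sum>c\<in>?S. \<Sum>d\<in>?S. z (c, d) * (\<eta> c * slice G \<eta> w (inv d \<otimes> b)))"
      using b by (intro sum.cong refl) (simp add: sum_distrib_left[symmetric] shift)
    also have "\<dots> = (\<Sum>d\<in>?S. \<Sum>c\<in>?S. z (c, d) * (\<eta> c * slice G \<eta> w (inv d \<otimes> b)))"
      by (rule sum.swap)
    also have "\<dots> = conv G (slice G \<eta> z) (slice G \<eta> w) b"
      unfolding conv_def using b by (auto simp: slice_def sum_distrib_right mult_ac intro!: sum.cong)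
    finally show ?thesis .
  qed
qed

end

section \<open>The twist lifted from an abelian subgroup\<close>

locale lifted_twist = group G for G (structure) +
  fixes H :: "'a set" and \<omega> :: "('a \<Rightarrow> 'k::{alg_closed_field, field_char_0}) \<Rightarrow> ('a \<Rightarrow> 'k) \<Rightarrow> 'k"
  assumes finite_carrier: "finite (carrier G)" and subgroup_H: "subgroup H G"
    and H_commute: "\<forall>x\<in>H. \<forall>y\<in>H. x \<otimes> y = y \<otimes> x"
    and cocycle: "two_cocycle G H \<omega>"
begin

abbreviation Hdual :: "('a \<Rightarrow> 'k) set" where
  "Hdual \<equiv> characters G H"

lemma H_carrier: "x \<in> H \<Longrightarrow> x \<in> carrier G"
  using subgroup.mem_carrier[OF subgroup_H] .

lemma finite_H: "finite H"
  using finite_carrier subgroup.subset[OF subgroup_H] by (rule finite_subset[rotated])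

lemma card_H_nonzero: "(of_nat (card H) :: 'k) \<noteq> 0"
  using finite_H subgroup.one_closed[OF subgroup_H] by (auto simp: card_gt_0_iff)

lemma comm_group_H: "comm_group (G\<lparr>carrier := H\<rparr>)"
proof -
  interpret H: group "G\<lparr>carrier := H\<rparr>" by (rule subgroup.subgroup_is_group[OF subgroup_H is_group])
  show ?thesis by (rule H.group_comm_groupI) (use H_commute in simp)
qed

lemma characters_H: "characters (G\<lparr>carrier := H\<rparr>) H = Hdual"
  by (simp add: characters_def)

lemma finite_Hdual: "finite Hdual"
  using comm_group.finite_characters[OF comm_group_H, where 'k = 'k] finite_H by (simp add: characters_H)

lemma sum_Hdual:
  "x \<in> H \<Longrightarrow> (\<Sum>\<alpha>\<in>Hdual. \<alpha> x) = (if x = \<one> then of_nat (card H) else 0)"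
  using comm_group.sum_characters[OF comm_group_H, where 'k = 'k] finite_H
  by (simp add: characters_H order_def)

lemma Hdual_orthogonal:
  assumes "\<alpha> \<in> Hdual" "\<beta> \<in> Hdual"
  shows "(\<Sum>x\<in>H. \<alpha> (inv x) * \<beta> x) = (if \<alpha> = \<beta> then of_nat (card H) else 0)"
proof -
  have "(\<Sum>x\<in>H. \<alpha> (inv x) * \<beta> x) = (\<Sum>x\<in>H. char_mult H (char_inv H \<alpha>) \<beta> x)"
    using assms(1) by (intro sum.cong) (simp_all add: character_inv[OF subgroup_H] char_mult_def char_inv_def)
  also have "\<dots> = (if \<alpha> = \<beta> then of_nat (card H) else 0)"
    using comm_group.sum_character[OF comm_group_H, of "char_mult H (char_inv H \<alpha>) \<beta>"]
      char_mult_in_characters[OF subgroup_H char_inv_in_characters[OF subgroup_H assms(1)] assms(2)]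
      char_mult_char_inv_eq_char_one_iff[OF assms]
    by (simp add: characters_H order_def)
  finally show ?thesis .
qed

lemma Hdual_character_is_evaluation:
  assumes "\<And>\<alpha> \<beta>. \<alpha> \<in> Hdual \<Longrightarrow> \<beta> \<in> Hdual \<Longrightarrow> \<phi> (char_mult H \<alpha> \<beta>) = \<phi> \<alpha> * \<phi> \<beta>"
    and "\<phi> (char_one H) = 1"
  shows "\<exists>h\<in>H. \<forall>\<beta>\<in>Hdual. \<phi> \<beta> = \<beta> h"
  using comm_group.dual_character_is_evaluation[OF comm_group_H, of \<phi>] assms finite_H
  by (simp add: characters_H)

lemma idem_eq_0: "x \<notin> H \<Longrightarrow> idem G H \<alpha> x = 0"
  by (simp add: idem_def)

lemma idem_supported: "supported_in (carrier G) (idem G H \<alpha>)"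
  using H_carrier by (auto simp: supported_in_def idem_def)

lemma idem_eq_sum_basis_el:
  "idem G H \<alpha> = (\<lambda>g. \<Sum>h\<in>H. \<alpha> (inv h) / of_nat (card H) * basis_el h g)"
  using finite_H by (auto simp: idem_def basis_el_def if_distrib[of "\<lambda>t. _ * t"] cong: if_cong)

lemma conv_basis_el_idem:
  assumes "h \<in> H" "\<beta> \<in> Hdual"
  shows "conv G (basis_el h) (idem G H \<beta>) = (\<lambda>g. \<beta> h * idem G H \<beta> g)"
proof
  fix g
  have "inv h \<otimes> g \<in> H \<longleftrightarrow> g \<in> H" if g: "g \<in> carrier G"
  proof
    assume "inv h \<otimes> g \<in> H"
    hence "h \<otimes> (inv h \<otimes> g) \<in> H" using subgroup.m_closed[OF subgroup_H assms(1)] by blast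
    thus "g \<in> H" using g H_carrier[OF assms(1)] by (simp add: m_assoc[symmetric])
  next
    assume "g \<in> H"
    thus "inv h \<otimes> g \<in> H" using assms(1) subgroup_H by (simp add: subgroup.m_closed subgroup.m_inv_closed)
  qed
  moreover have "\<beta> (inv (inv h \<otimes> g)) = \<beta> h * \<beta> (inv g)" if "g \<in> H"
    using that assms subgroup_H H_carrier character_hom[OF assms(2)]
    by (simp add: inv_mult_group subgroup.m_inv_closed)
  ultimately show "conv G (basis_el h) (idem G H \<beta>) g = \<beta> h * idem G H \<beta> g"
    using assms(1) H_carrier
    by (auto simp: conv_basis_el_left[OF finite_carrier] idem_def)
qed

lemma conv_idem:
  assumes "\<alpha> \<in> Hdual" "\<beta> \<in> Hdual"
  shows "conv G (idem G H \<alpha>) (idem G H \<beta>) = (if \<alpha> = \<beta> then idem G H \<alpha> else (\<lambda>_. 0))"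
proof -
  let ?n = "of_nat (card H) :: 'k"
  have "conv G (idem G H \<alpha>) (idem G H \<beta>)
      = (\<lambda>g. \<Sum>h\<in>H. conv G (\<lambda>g. \<alpha> (inv h) / ?n * basis_el h g) (idem G H \<beta>) g)"
    unfolding idem_eq_sum_basis_el[of \<alpha>] by (rule conv_sum_left)
  also have "\<dots> = (\<lambda>g. \<Sum>h\<in>H. \<alpha> (inv h) / ?n * (\<beta> h * idem G H \<beta> g))"
    by (intro ext sum.cong refl) (simp only: conv_smult_left conv_basis_el_idem[OF _ assms(2)])
  also have "\<dots> = (\<lambda>g. (\<Sum>h\<in>H. \<alpha> (inv h) * \<beta> h) / ?n * idem G H \<beta> g)"
    by (simp add: sum_divide_distrib sum_distrib_left sum_distrib_right mult_ac)
  finally show ?thesis using Hdual_orthogonal[OF assms] card_H_nonzero by auto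
qed

definition idem_comb :: "(('a \<Rightarrow> 'k) \<Rightarrow> 'k) \<Rightarrow> ('a \<Rightarrow> 'k)" where
  "idem_comb c = (\<lambda>g. \<Sum>\<alpha>\<in>Hdual. c \<alpha> * idem G H \<alpha> g)"

lemma idem_comb_cong: "(\<And>\<alpha>. \<alpha> \<in> Hdual \<Longrightarrow> c \<alpha> = d \<alpha>) \<Longrightarrow> idem_comb c = idem_comb d"
  unfolding idem_comb_def by (intro ext sum.cong) auto

lemma conv_idem_comb: "conv G (idem_comb c) (idem_comb d) = idem_comb (\<lambda>\<alpha>. c \<alpha> * d \<alpha>)"
proof -
  have "conv G (idem G H \<alpha>) (idem_comb d) = (\<lambda>g. d \<alpha> * idem G H \<alpha> g)" if "\<alpha> \<in> Hdual" for \<alpha>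
  proof -
    have "conv G (idem G H \<alpha>) (idem_comb d) = (\<lambda>g. \<Sum>\<beta>\<in>Hdual. if \<beta> = \<alpha> then d \<alpha> * idem G H \<alpha> g else 0)"
      using that unfolding idem_comb_def
      by (auto simp: conv_sum_right conv_smult_right conv_idem intro!: ext sum.cong)
    thus ?thesis using that finite_Hdual by simp
  qed
  thus ?thesis
    unfolding idem_comb_def[of c]
    by (simp add: conv_sum_left conv_smult_left idem_comb_def mult.assoc cong: sum.cong)
qed

lemma idem_comb_evaluation: "h \<in> H \<Longrightarrow> idem_comb (\<lambda>\<beta>. \<beta> h) = basis_el h"
proof
  fix g assume h: "h \<in> H"
  show "idem_comb (\<lambda>\<beta>. \<beta> h) g = basis_el h g"
  proof (cases "g \<in> H")
    case False
    thus ?thesis using h by (auto simp: idem_comb_def idem_eq_0 basis_el_def)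
  next
    case g: True
    have hg: "h \<otimes> inv g \<in> H" using h g subgroup_H by (simp add: subgroup.m_closed subgroup.m_inv_closed)
    have "idem_comb (\<lambda>\<beta>. \<beta> h) g = (\<Sum>\<beta>\<in>Hdual. \<beta> (h \<otimes> inv g)) / of_nat (card H)"
      using g h subgroup_H
      by (auto simp: idem_comb_def idem_def sum_divide_distrib subgroup.m_inv_closed
          intro!: sum.cong character_hom[symmetric])
    also have "\<dots> = basis_el h g"
      using sum_Hdual[OF hg] card_H_nonzero H_carrier[OF g] H_carrier[OF h]
      by (auto simp: basis_el_def inv_solve_right')
    finally show ?thesis .
  qed
qed

lemma idem_comb_one: "idem_comb (\<lambda>_. 1) = basis_el \<one>"
proof -
  have "idem_comb (\<lambda>_. 1) = idem_comb (\<lambda>\<beta>. \<beta> \<one>)"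
    by (rule idem_comb_cong) (simp add: character_one[OF subgroup_H])
  thus ?thesis using idem_comb_evaluation[OF subgroup.one_closed[OF subgroup_H]] by simp
qed

definition idem_comb2 :: "(('a \<Rightarrow> 'k) \<Rightarrow> ('a \<Rightarrow> 'k) \<Rightarrow> 'k) \<Rightarrow> ('a \<times> 'a \<Rightarrow> 'k)" where
  "idem_comb2 c = (\<lambda>p. \<Sum>\<alpha>\<in>Hdual. \<Sum>\<beta>\<in>Hdual. c \<alpha> \<beta> * tensor (idem G H \<alpha>) (idem G H \<beta>) p)"

lemma twistJ_eq_idem_comb2: "twistJ G H \<omega> = idem_comb2 \<omega>"
  by (simp add: twistJ_def idem_comb2_def)

lemma idem_comb2_cong:
  "(\<And>\<alpha> \<beta>. \<alpha> \<in> Hdual \<Longrightarrow> \<beta> \<in> Hdual \<Longrightarrow> c \<alpha> \<beta> = d \<alpha> \<beta>) \<Longrightarrow> idem_comb2 c = idem_comb2 d"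
  unfolding idem_comb2_def by (intro ext sum.cong) auto

lemma idem_comb2_supported: "supported_in (carrier (G \<times>\<times> G)) (idem_comb2 c)"
  unfolding supported_in_def idem_comb2_def
proof (intro allI impI)
  fix p :: "'a \<times> 'a" assume "p \<notin> carrier (G \<times>\<times> G)"
  hence "fst p \<notin> H \<or> snd p \<notin> H" using H_carrier by (cases p) auto
  thus "(\<Sum>\<alpha>\<in>Hdual. \<Sum>\<beta>\<in>Hdual. c \<alpha> \<beta> * tensor (idem G H \<alpha>) (idem G H \<beta>) p) = 0"
    by (auto simp: tensor_def idem_eq_0 case_prod_beta)
qed

lemma idem_comb2_swap: "idem_comb2 c \<circ> prod.swap = idem_comb2 (\<lambda>\<alpha> \<beta>. c \<beta> \<alpha>)"
  unfolding idem_comb2_def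
  by (rule ext, subst sum.swap) (simp add: tensor_def mult_ac)

lemma idem_comb2_one: "idem_comb2 (\<lambda>_ _. 1) = tone G"
proof
  fix p :: "'a \<times> 'a"
  have "idem_comb2 (\<lambda>_ _. 1) p = idem_comb (\<lambda>_. 1) (fst p) * idem_comb (\<lambda>_. 1) (snd p)"
    by (simp add: idem_comb2_def idem_comb_def tensor_def case_prod_beta sum_product)
  thus "idem_comb2 (\<lambda>_ _. 1) p = tone G p"
    by (simp add: idem_comb_one basis_el_def tone_def case_prod_beta)
qed

lemma tmult_tensor_idem:
  assumes "\<alpha> \<in> Hdual" "\<beta> \<in> Hdual" "\<alpha>' \<in> Hdual" "\<beta>' \<in> Hdual"
  shows "tmult G (tensor (idem G H \<alpha>) (idem G H \<beta>)) (tensor (idem G H \<alpha>') (idem G H \<beta>')) p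
    = (if \<alpha>' = \<alpha> \<and> \<beta>' = \<beta> then tensor (idem G H \<alpha>) (idem G H \<beta>) p else 0)"
  unfolding tmult_tensor using assms by (auto simp: conv_idem tensor_def)

lemma tmult_idem_comb2: "tmult G (idem_comb2 c) (idem_comb2 d) = idem_comb2 (\<lambda>\<alpha> \<beta>. c \<alpha> \<beta> * d \<alpha> \<beta>)"
proof -
  interpret GG: group "G \<times>\<times> G" by (rule DirProd_group[OF is_group is_group])
  let ?e = "\<lambda>\<alpha> \<beta>. tensor (idem G H \<alpha>) (idem G H \<beta>)"
  have inner: "(\<Sum>\<alpha>'\<in>Hdual. \<Sum>\<beta>'\<in>Hdual. d \<alpha>' \<beta>' * tmult G (?e \<alpha> \<beta>) (?e \<alpha>' \<beta>') p)
      = d \<alpha> \<beta> * ?e \<alpha> \<beta> p" if "\<alpha> \<in> Hdual" "\<beta> \<in> Hdual" for \<alpha> \<beta> p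
  proof -
    have "(\<Sum>\<alpha>'\<in>Hdual. \<Sum>\<beta>'\<in>Hdual. d \<alpha>' \<beta>' * tmult G (?e \<alpha> \<beta>) (?e \<alpha>' \<beta>') p)
        = (\<Sum>\<alpha>'\<in>Hdual. if \<alpha>' = \<alpha> then (\<Sum>\<beta>'\<in>Hdual. if \<beta>' = \<beta> then d \<alpha> \<beta> * ?e \<alpha> \<beta> p else 0) else 0)"
      using that by (auto simp: tmult_tensor_idem intro!: sum.cong)
    thus ?thesis using that finite_Hdual by simp
  qed
  have "tmult G (idem_comb2 c) (idem_comb2 d)
      = (\<lambda>p. \<Sum>\<alpha>\<in>Hdual. \<Sum>\<beta>\<in>Hdual. c \<alpha> \<beta> *
           (\<Sum>\<alpha>'\<in>Hdual. \<Sum>\<beta>'\<in>Hdual. d \<alpha>' \<beta>' * tmult G (?e \<alpha> \<beta>) (?e \<alpha>' \<beta>') p))"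
    unfolding tmult_eq_conv idem_comb2_def
    by (simp add: GG.conv_sum_left GG.conv_sum_right GG.conv_smult_left GG.conv_smult_right
        sum_distrib_left)
  also have "\<dots> = idem_comb2 (\<lambda>\<alpha> \<beta>. c \<alpha> \<beta> * d \<alpha> \<beta>)"
    unfolding idem_comb2_def by (intro ext sum.cong refl) (simp add: inner mult.assoc)
  finally show ?thesis .
qed

lemma tinv_idem_comb2: "tinv G (idem_comb2 \<omega>) = idem_comb2 (\<lambda>\<alpha> \<beta>. inverse (\<omega> \<alpha> \<beta>))"
proof -
  interpret GG: group "G \<times>\<times> G" by (rule DirProd_group[OF is_group is_group])
  let ?J = "idem_comb2 \<omega>" and ?J' = "idem_comb2 (\<lambda>\<alpha> \<beta>. inverse (\<omega> \<alpha> \<beta>))"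
  have nonzero: "\<omega> \<alpha> \<beta> \<noteq> 0" if "\<alpha> \<in> Hdual" "\<beta> \<in> Hdual" for \<alpha> \<beta>
    using cocycle that by (simp add: two_cocycle_def)
  have "tmult G ?J ?J' = tone G" "tmult G ?J' ?J = tone G"
    using idem_comb2_cong[of _ "\<lambda>_ _. 1"] nonzero by (simp_all add: tmult_idem_comb2 idem_comb2_one)
  hence inverse: "conv (G \<times>\<times> G) ?J ?J' = basis_el \<one>\<^bsub>G \<times>\<times> G\<^esub>" "conv (G \<times>\<times> G) ?J' ?J = basis_el \<one>\<^bsub>G \<times>\<times> G\<^esub>"
    by (simp_all add: tmult_eq_conv tone_eq_basis_el)
  have "(THE y. (\<forall>p. p \<notin> carrier G \<times> carrier G \<longrightarrow> y p = 0) \<and> tmult G ?J y = tone G \<and> tmult G y ?J = tone G)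
      = ?J'"
  proof (rule the_equality)
    show "(\<forall>p. p \<notin> carrier G \<times> carrier G \<longrightarrow> ?J' p = 0) \<and> tmult G ?J ?J' = tone G \<and> tmult G ?J' ?J = tone G"
      using idem_comb2_supported inverse by (simp add: supported_in_def tmult_eq_conv tone_eq_basis_el)
  next
    fix y assume "(\<forall>p. p \<notin> carrier G \<times> carrier G \<longrightarrow> y p = 0) \<and> tmult G ?J y = tone G \<and> tmult G y ?J = tone G"
    thus "y = ?J'"
      using GG.conv_inverse_unique[of y ?J ?J'] finite_carrier idem_comb2_supported inverse
      by (simp add: supported_in_def tmult_eq_conv tone_eq_basis_el)
  qed
  thus ?thesis by (simp add: tinv_def)
qed

lemma cocycle_nonzero: "\<alpha> \<in> Hdual \<Longrightarrow> \<beta> \<in> Hdual \<Longrightarrow> \<omega> \<alpha> \<beta> \<noteq> 0"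
  using cocycle by (simp add: two_cocycle_def)

lemma cocycle_identity:
  "\<alpha> \<in> Hdual \<Longrightarrow> \<beta> \<in> Hdual \<Longrightarrow> \<gamma> \<in> Hdual \<Longrightarrow>
     \<omega> \<alpha> \<beta> * \<omega> (char_mult H \<alpha> \<beta>) \<gamma> = \<omega> \<alpha> (char_mult H \<beta> \<gamma>) * \<omega> \<beta> \<gamma>"
  using cocycle by (simp add: two_cocycle_def)

lemma cocycle_normalized: "\<alpha> \<in> Hdual \<Longrightarrow> \<omega> (char_one H) \<alpha> = 1 \<and> \<omega> \<alpha> (char_one H) = 1"
  using cocycle by (simp add: two_cocycle_def)

text \<open>The alternating form of a 2-cocycle on an abelian group is a bicharacter: solving three
  instances of the cocycle identity for \<open>\<omega> (\<beta>\<gamma>) \<chi>\<close>, \<open>\<omega> \<chi> \<beta>\<close> and \<open>\<omega> \<beta> \<chi>\<close>, the remaining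
  factors cancel.\<close>
lemma cocycle_commutator_mult:
  assumes "\<chi> \<in> Hdual" "\<beta> \<in> Hdual" "\<gamma> \<in> Hdual"
  shows "\<omega> (char_mult H \<beta> \<gamma>) \<chi> / \<omega> \<chi> (char_mult H \<beta> \<gamma>)
       = \<omega> \<beta> \<chi> / \<omega> \<chi> \<beta> * (\<omega> \<gamma> \<chi> / \<omega> \<chi> \<gamma>)"
proof -
  have closed: "char_mult H \<beta> \<gamma> \<in> Hdual" "char_mult H \<chi> \<beta> \<in> Hdual" "char_mult H \<chi> \<gamma> \<in> Hdual"
    using assms by (simp_all add: char_mult_in_characters[OF subgroup_H])
  have b: "\<omega> (char_mult H \<beta> \<gamma>) \<chi> = \<omega> \<beta> (char_mult H \<chi> \<gamma>) * \<omega> \<gamma> \<chi> / \<omega> \<beta> \<gamma>"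
    using cocycle_identity[of \<beta> \<gamma> \<chi>] assms cocycle_nonzero char_mult_commute[of H \<gamma> \<chi>]
    by (simp add: field_simps)
  have e: "\<omega> \<chi> \<beta> = \<omega> \<chi> (char_mult H \<beta> \<gamma>) * \<omega> \<beta> \<gamma> / \<omega> (char_mult H \<chi> \<beta>) \<gamma>"
    using cocycle_identity[of \<chi> \<beta> \<gamma>] assms closed cocycle_nonzero by (simp add: field_simps)
  have h: "\<omega> \<beta> \<chi> = \<omega> \<beta> (char_mult H \<chi> \<gamma>) * \<omega> \<chi> \<gamma> / \<omega> (char_mult H \<chi> \<beta>) \<gamma>"
    using cocycle_identity[of \<beta> \<chi> \<gamma>] assms closed cocycle_nonzero char_mult_commute[of H \<beta> \<chi>]
    by (simp add: field_simps)
  show ?thesis unfolding b e h using assms closed cocycle_nonzero by (simp add: field_simps)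
qed

end

section \<open>Central group-likes of the dual\<close>

locale lifted_twist_character = lifted_twist G H \<omega>
  for G (structure) and H and \<omega> :: "('a \<Rightarrow> 'k::{alg_closed_field, field_char_0}) \<Rightarrow> ('a \<Rightarrow> 'k) \<Rightarrow> 'k" +
  fixes \<eta> :: "'a \<Rightarrow> 'k"
  assumes lin_char: "\<eta> \<in> lin_chars G"
begin

abbreviation \<eta>H :: "'a \<Rightarrow> 'k" where
  "\<eta>H \<equiv> restrict_char H \<eta>"

lemma \<eta>_character: "\<eta> \<in> characters G (carrier G)"
  using lin_char by (simp add: lin_chars_def)

lemma \<eta>H_in_Hdual: "\<eta>H \<in> Hdual"
  using \<eta>_character subgroup.m_closed[OF subgroup_H] H_carrier
  by (auto simp: characters_def restrict_char_def)

lemma sum_idem_mult_\<eta>: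
  assumes "\<alpha> \<in> Hdual"
  shows "(\<Sum>x\<in>carrier G. idem G H \<alpha> x * \<eta> x) = (if \<alpha> = \<eta>H then 1 else 0)"
proof -
  have "(\<Sum>x\<in>carrier G. idem G H \<alpha> x * \<eta> x) = (\<Sum>x\<in>H. idem G H \<alpha> x * \<eta> x)"
    using finite_carrier subgroup.subset[OF subgroup_H]
    by (intro sum.mono_neutral_right) (auto simp: idem_eq_0)
  also have "\<dots> = (\<Sum>x\<in>H. \<alpha> (inv x) * \<eta>H x) / of_nat (card H)"
    by (simp add: idem_def restrict_char_def sum_divide_distrib)
  finally show ?thesis using Hdual_orthogonal[OF assms \<eta>H_in_Hdual] card_H_nonzero by simp
qed

lemma slice_idem_comb2: "slice G \<eta> (idem_comb2 c) = idem_comb (\<lambda>\<beta>. c \<eta>H \<beta>)"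
proof -
  have "slice G \<eta> (idem_comb2 c)
      = (\<lambda>g. \<Sum>\<alpha>\<in>Hdual. if \<alpha> = \<eta>H then \<Sum>\<beta>\<in>Hdual. c \<alpha> \<beta> * idem G H \<beta> g else 0)"
    unfolding idem_comb2_def
    by (auto simp: slice_sum slice_smult slice_tensor[OF idem_supported] sum_idem_mult_\<eta>
        intro!: sum.cong)
  also have "\<dots> = idem_comb (\<lambda>\<beta>. c \<eta>H \<beta>)"
    using \<eta>H_in_Hdual finite_Hdual by (simp add: idem_comb_def)
  finally show ?thesis .
qed

lemma slice_twisted_comult:
  assumes "x \<in> carrier G"
  shows "slice G \<eta> (tmult G (tmult G (idem_comb2 c) (comult G (basis_el x))) (idem_comb2 d))
       = (\<lambda>g. \<eta> x * conv G (conv G (idem_comb (c \<eta>H)) (basis_el x)) (idem_comb (d \<eta>H)) g)"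
proof -
  have supp: "supported_in (carrier G) (basis_el x)"
    using assms by (simp add: supported_in_def basis_el_def)
  have "(\<Sum>y\<in>carrier G. basis_el x y * \<eta> y) = (\<Sum>y\<in>carrier G. if y = x then \<eta> x else 0)"
    by (rule sum.cong) (auto simp: basis_el_def)
  also have "\<dots> = \<eta> x" using assms finite_carrier by simp
  finally have "slice G \<eta> (comult G (basis_el x)) = (\<lambda>g. \<eta> x * basis_el x g)"
    using slice_tensor[OF supp, of \<eta> "basis_el x"] by (simp add: comult_basis_el[OF assms])
  thus ?thesis
    by (simp add: slice_tmult[OF \<eta>_character] slice_idem_comb2 conv_smult_left conv_smult_right)
qed

lemma comultJ_eq:
  "comultJ G H \<omega> (basis_el x)
     = tmult G (tmult G (idem_comb2 (\<lambda>\<alpha> \<beta>. inverse (\<omega> \<alpha> \<beta>))) (comult G (basis_el x))) (idem_comb2 \<omega>)"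
  by (simp add: comultJ_def tinv_idem_comb2 twistJ_eq_idem_comb2)

lemma comultJ_swap:
  "comultJ G H \<omega> (basis_el x) \<circ> prod.swap
     = tmult G (tmult G (idem_comb2 (\<lambda>\<alpha> \<beta>. inverse (\<omega> \<beta> \<alpha>))) (comult G (basis_el x)))
         (idem_comb2 (\<lambda>\<alpha> \<beta>. \<omega> \<beta> \<alpha>))"
  by (simp add: comultJ_eq tmult_swap[symmetric] comult_swap idem_comb2_swap)

lemma dual_mult_\<eta>_left:
  "dual_mult G H \<omega> \<eta> f x = (if x \<in> carrier G
     then \<Sum>b\<in>carrier G. slice G \<eta> (comultJ G H \<omega> (basis_el x)) b * f b else 0)"
proof (cases "x \<in> carrier G")
  case True
  let ?Z = "comultJ G H \<omega> (basis_el x)"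
  have "dual_mult G H \<omega> \<eta> f x = (\<Sum>a\<in>carrier G. \<Sum>b\<in>carrier G. ?Z (a, b) * \<eta> a * f b)"
    using True by (simp add: dual_mult_def sum.cartesian_product)
  also have "\<dots> = (\<Sum>b\<in>carrier G. \<Sum>a\<in>carrier G. ?Z (a, b) * \<eta> a * f b)"
    by (rule sum.swap)
  also have "\<dots> = (\<Sum>b\<in>carrier G. slice G \<eta> ?Z b * f b)"
    by (intro sum.cong refl) (simp add: slice_def sum_distrib_right)
  finally show ?thesis using True by simp
qed (simp add: dual_mult_def)

lemma dual_mult_\<eta>_right:
  "dual_mult G H \<omega> f \<eta> x = (if x \<in> carrier G
     then \<Sum>a\<in>carrier G. slice G \<eta> (comultJ G H \<omega> (basis_el x) \<circ> prod.swap) a * f a else 0)"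
proof (cases "x \<in> carrier G")
  case True
  let ?Z = "comultJ G H \<omega> (basis_el x)"
  have "dual_mult G H \<omega> f \<eta> x = (\<Sum>a\<in>carrier G. \<Sum>b\<in>carrier G. ?Z (a, b) * f a * \<eta> b)"
    using True by (simp add: dual_mult_def sum.cartesian_product)
  also have "\<dots> = (\<Sum>a\<in>carrier G. slice G \<eta> (?Z \<circ> prod.swap) a * f a)"
    by (intro sum.cong refl) (simp add: slice_def sum_distrib_left sum_distrib_right mult_ac)
  finally show ?thesis using True by simp
qed (simp add: dual_mult_def)

lemma in_dual_center_iff_slices:
  "in_dual_center G H \<omega> \<eta> \<longleftrightarrow> (\<forall>x\<in>carrier G.
     slice G \<eta> (comultJ G H \<omega> (basis_el x)) = slice G \<eta> (comultJ G H \<omega> (basis_el x) \<circ> prod.swap))"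
proof
  assume central: "in_dual_center G H \<omega> \<eta>"
  have sum_basis_el: "(\<Sum>y\<in>carrier G. s y * basis_el b y) = s b" if "b \<in> carrier G" for s b
    using that finite_carrier by (simp add: basis_el_def if_distrib cong: if_cong)
  show "\<forall>x\<in>carrier G. slice G \<eta> (comultJ G H \<omega> (basis_el x))
                     = slice G \<eta> (comultJ G H \<omega> (basis_el x) \<circ> prod.swap)"
  proof (intro ballI ext)
    fix x b assume x: "x \<in> carrier G"
    show "slice G \<eta> (comultJ G H \<omega> (basis_el x)) b = slice G \<eta> (comultJ G H \<omega> (basis_el x) \<circ> prod.swap) b"
    proof (cases "b \<in> carrier G")
      case False thus ?thesis by (simp add: slice_def)
    next
      case True
      have "dual_mult G H \<omega> \<eta> (basis_el b) x = dual_mult G H \<omega> (basis_el b) \<eta> x"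
        using central by (simp add: in_dual_center_def)
      thus ?thesis using x True by (simp add: dual_mult_\<eta>_left dual_mult_\<eta>_right sum_basis_el)
    qed
  qed
next
  assume "\<forall>x\<in>carrier G. slice G \<eta> (comultJ G H \<omega> (basis_el x))
                       = slice G \<eta> (comultJ G H \<omega> (basis_el x) \<circ> prod.swap)"
  thus "in_dual_center G H \<omega> \<eta>"
    unfolding in_dual_center_def by (auto simp: dual_mult_\<eta>_left dual_mult_\<eta>_right)
qed

text \<open>\<open>\<eta>_J\<close>, \<open>\<eta>_Jinv\<close> are \<open>(\<eta> \<otimes> id)\<close> applied to \<open>J\<close> and \<open>J\<^sup>-\<^sup>1\<close>, and \<open>J_\<eta>\<close>, \<open>Jinv_\<eta>\<close>
  are \<open>(id \<otimes> \<eta>)\<close> applied to them.\<close>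
definition \<eta>_J :: "'a \<Rightarrow> 'k" where "\<eta>_J = idem_comb (\<lambda>\<beta>. \<omega> \<eta>H \<beta>)"
definition \<eta>_Jinv :: "'a \<Rightarrow> 'k" where "\<eta>_Jinv = idem_comb (\<lambda>\<beta>. inverse (\<omega> \<eta>H \<beta>))"
definition J_\<eta> :: "'a \<Rightarrow> 'k" where "J_\<eta> = idem_comb (\<lambda>\<beta>. \<omega> \<beta> \<eta>H)"
definition Jinv_\<eta> :: "'a \<Rightarrow> 'k" where "Jinv_\<eta> = idem_comb (\<lambda>\<beta>. inverse (\<omega> \<beta> \<eta>H))"

lemma in_dual_center_iff_conv:
  "in_dual_center G H \<omega> \<eta> \<longleftrightarrow>
     (\<forall>x\<in>carrier G. conv G (conv G \<eta>_Jinv (basis_el x)) \<eta>_J = conv G (conv G Jinv_\<eta> (basis_el x)) J_\<eta>)"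
proof -
  have "slice G \<eta> (comultJ G H \<omega> (basis_el x)) = slice G \<eta> (comultJ G H \<omega> (basis_el x) \<circ> prod.swap)
    \<longleftrightarrow> conv G (conv G \<eta>_Jinv (basis_el x)) \<eta>_J = conv G (conv G Jinv_\<eta> (basis_el x)) J_\<eta>"
    if x: "x \<in> carrier G" for x
    using character_nonzero[OF \<eta>_character x]
    by (simp only: comultJ_swap)
       (simp add: comultJ_eq slice_twisted_comult[OF x] fun_eq_iff \<eta>_J_def \<eta>_Jinv_def J_\<eta>_def Jinv_\<eta>_def)
  thus ?thesis by (simp add: in_dual_center_iff_slices)
qed

lemma omega_regular_imp_in_dual_center:
  assumes "omega_regular G H \<omega> \<eta>H"
  shows "in_dual_center G H \<omega> \<eta>"
proof -
  have "\<omega> \<eta>H \<beta> = \<omega> \<beta> \<eta>H" if "\<beta> \<in> Hdual" for \<beta>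
    using assms that by (simp add: omega_regular_def)
  hence "\<eta>_Jinv = Jinv_\<eta>" "\<eta>_J = J_\<eta>"
    unfolding \<eta>_J_def \<eta>_Jinv_def J_\<eta>_def Jinv_\<eta>_def by (auto intro: idem_comb_cong)
  thus ?thesis by (simp add: in_dual_center_iff_conv)
qed

lemma conv_\<eta>_J_\<eta>_Jinv: "conv G \<eta>_J \<eta>_Jinv = basis_el \<one>"
  and conv_J_\<eta>_Jinv_\<eta>: "conv G J_\<eta> Jinv_\<eta> = basis_el \<one>"
proof -
  have "conv G \<eta>_J \<eta>_Jinv = idem_comb (\<lambda>_. 1)" "conv G J_\<eta> Jinv_\<eta> = idem_comb (\<lambda>_. 1)"
    unfolding \<eta>_J_def \<eta>_Jinv_def J_\<eta>_def Jinv_\<eta>_def conv_idem_comb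
    by (rule idem_comb_cong, simp add: cocycle_nonzero \<eta>H_in_Hdual)+
  thus "conv G \<eta>_J \<eta>_Jinv = basis_el \<one>" "conv G J_\<eta> Jinv_\<eta> = basis_el \<one>"
    by (simp_all add: idem_comb_one)
qed

lemma in_dual_center_imp_commute:
  assumes "in_dual_center G H \<omega> \<eta>" "x \<in> carrier G"
  shows "conv G (conv G J_\<eta> \<eta>_Jinv) (basis_el x) = conv G (basis_el x) (conv G J_\<eta> \<eta>_Jinv)"
proof -
  have supp: "supported_in (carrier G) (basis_el x)"
    using assms(2) by (simp add: supported_in_def basis_el_def)
  have "conv G (conv G J_\<eta> \<eta>_Jinv) (basis_el x)
      = conv G J_\<eta> (conv G (conv G (conv G \<eta>_Jinv (basis_el x)) \<eta>_J) \<eta>_Jinv)"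
    by (simp add: conv_assoc conv_\<eta>_J_\<eta>_Jinv conv_one_right[OF finite_carrier supp])
  also have "\<dots> = conv G J_\<eta> (conv G (conv G (conv G Jinv_\<eta> (basis_el x)) J_\<eta>) \<eta>_Jinv)"
    using assms by (simp add: in_dual_center_iff_conv)
  also have "\<dots> = conv G (basis_el x) (conv G J_\<eta> \<eta>_Jinv)"
    by (simp add: conv_assoc[symmetric] conv_J_\<eta>_Jinv_\<eta> conv_one_left[OF finite_carrier supp])
  finally show ?thesis .
qed

lemma in_dual_center_imp_omega_regular:
  assumes central: "in_dual_center G H \<omega> \<eta>" and trivial_center: "center_grp G = {\<one>}"
  shows "omega_regular G H \<omega> \<eta>H"
proof -
  have "\<exists>h\<in>H. \<forall>\<beta>\<in>Hdual. \<omega> \<beta> \<eta>H / \<omega> \<eta>H \<beta> = \<beta> h"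
    using cocycle_commutator_mult[OF \<eta>H_in_Hdual] cocycle_normalized[OF \<eta>H_in_Hdual]
    by (intro Hdual_character_is_evaluation) simp_all
  then obtain h where h: "h \<in> H" "\<forall>\<beta>\<in>Hdual. \<omega> \<beta> \<eta>H / \<omega> \<eta>H \<beta> = \<beta> h" by blast
  have "conv G J_\<eta> \<eta>_Jinv = idem_comb (\<lambda>\<beta>. \<beta> h)"
    unfolding J_\<eta>_def \<eta>_Jinv_def conv_idem_comb
    by (rule idem_comb_cong) (use h(2) in \<open>simp add: divide_inverse\<close>)
  hence u: "conv G J_\<eta> \<eta>_Jinv = basis_el h" using idem_comb_evaluation[OF h(1)] by simp
  have "x \<otimes> h \<otimes> inv x = h" if "x \<in> carrier G" for x
  proof -
    have "(basis_el h (x \<otimes> h \<otimes> inv x) :: 'k) = basis_el h h"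
      using conv_commute_imp_conj_invariant[OF finite_carrier that H_carrier[OF h(1)]]
        in_dual_center_imp_commute[OF central that] by (simp add: u)
    thus ?thesis by (simp add: basis_el_def split: if_splits)
  qed
  hence "h \<otimes> x = x \<otimes> h" if "x \<in> carrier G" for x
    using that H_carrier[OF h(1)] by (metis inv_solve_right' m_closed)
  hence "h = \<one>" using trivial_center H_carrier[OF h(1)] by (auto simp: center_grp_def)
  hence "\<omega> \<beta> \<eta>H / \<omega> \<eta>H \<beta> = 1" if "\<beta> \<in> Hdual" for \<beta>
    using h(2) that character_one[OF subgroup_H that] by simp
  thus ?thesis
    using cocycle_nonzero[OF \<eta>H_in_Hdual] by (simp add: omega_regular_def)
qed

end

theorem theorem3p1:
  fixes G :: "('g, 'b) monoid_scheme"
    and H :: "'g set"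
    and \<omega> :: "('g \<Rightarrow> 'k::{alg_closed_field, field_char_0}) \<Rightarrow> ('g \<Rightarrow> 'k) \<Rightarrow> 'k"
    and \<eta> :: "'g \<Rightarrow> 'k"
  assumes "group G"
    and "finite (carrier G)"
    and "center_grp G = {\<one>\<^bsub>G\<^esub>}"
    and "subgroup H G"
    and "\<forall>x\<in>H. \<forall>y\<in>H. x \<otimes>\<^bsub>G\<^esub> y = y \<otimes>\<^bsub>G\<^esub> x"
    and "two_cocycle G H \<omega>"
    and "\<eta> \<in> lin_chars G"
  shows "(in_dual_center G H \<omega> \<eta> \<longleftrightarrow> omega_regular G H \<omega> (restrict_char H \<eta>))
       \<and> (non_degenerate G H \<omega> \<longrightarrow>
            (in_dual_center G H \<omega> \<eta> \<longleftrightarrow> restrict_char H \<eta> = char_one H))"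
proof -
  interpret lifted_twist_character G H \<omega> \<eta>
    using assms by (simp add: lifted_twist_character_def lifted_twist_character_axioms_def
        lifted_twist_def lifted_twist_axioms_def)
  have "in_dual_center G H \<omega> \<eta> \<longleftrightarrow> omega_regular G H \<omega> (restrict_char H \<eta>)"
    using omega_regular_imp_in_dual_center in_dual_center_imp_omega_regular[OF _ assms(3)] by blast
  moreover have "omega_regular G H \<omega> (char_one H)"
    using cocycle_normalized by (simp add: omega_regular_def)
  ultimately show ?thesis using \<eta>H_in_Hdual by (auto simp: non_degenerate_def)
qed

end
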